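(* Let the standing assumptions (listed in the context) hold, and suppose there are $\bar k\ge0$ and $\mu>0$ such that $\mathcal{J}(x_k)-\mathcal{J}^*\le\frac{1}{\mu}\|\nabla\mathcal{J}(x_k)\|^2$ for all $k\ge\bar k$, where $\mathcal{J}^*:=\lim_{k\to\infty}\mathcal{J}(x_k)$. Then there exists $x^*\in\mathcal{X}$ such that 1) $\nabla\mathcal{J}(x^* )=0$ and $\mathcal{J}^*=\mathcal{J}(x^* )$; 2) the iterates $(x_k)$ converge r-linearly to $x^*$; 3) the gradients $(\nabla\mathcal{J}(x_k))$ converge r-linearly to zero; 4) the function values $(\mathcal{J}(x_k))$ converge q-linearly to $\mathcal{J}(x^* )$; specifically, $\mathcal{J}(x_{k+1})-\mathcal{J}(x^* )\le\left(1-\frac{\sigma\alpha_k\mu}{\|B_k\|}\right)[\mathcal{J}(x_k)-\mathcal{J}(x^* )]$ for all $k\ge\bar k$, and the supremum of the term in round brackets is strictly smaller than 1.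
   Context: Let $\mathcal{X}$ be a Hilbert space and $\mathcal{J}:\mathcal{X}\to\mathbb{R}$. Algorithm SLBFGS (structured inverse L-BFGS): inputs $x_0\in\mathcal{X}$, $\epsilon\geq0$, $\ell\in\mathbb{N}_0$, $c_0\geq 0$, $C_0\in[c_0,\infty]$, $c_s,c_1,c_2>0$; let $\tau_0>0$. For $k=0,1,2,\ldots$: let $m=\max\{0,k-\ell\}$; choose a symmetric positive semi-definite bounded linear operator $S_k$; set $B_k^{(0)}=\tau_k I+S_k$; let $B_k$ be obtained from $B_k^{(0)}$ and the currently stored pairs $(s_j,y_j)$, $m\le j\le k-1$, by successive L-BFGS updates $B\mapsto B+\frac{yy^T}{y^Ts}-\frac{Bss^TB}{s^TBs}$; set $d_k=-B_k^{-1}\nabla\mathcal{J}(x_k)$; compute a step length $\alpha_k>0$ by a line search; set $s_k=\alpha_kd_k$, $x_{k+1}=x_k+s_k$, $y_k=\nabla\mathcal{J}(x_{k+1})-\nabla\mathcal{J}(x_k)$; store $(s_k,y_k)$ only if $y_k^Ts_k>c_s\|s_k\|^2$; if $k\ge\ell$ remove $(s_m,y_m)$ from storage; stop with output $x_{k+1}$ if $\|\nabla\mathcal{J}(x_{k+1})\|\le\epsilon$; set $z_k=y_k-S_{k+1}s_k$, $\omega^l_{k+1}=\min\{c_0,c_1\|\nabla\mathcal{J}(x_{k+1})\|^{c_2}\}$, $\omega^u_{k+1}=\max\{C_0,(c_1\|\nabla\mathcal{J}(x_{k+1})\|^{c_2})^{-1}\}$; with $P(t)=\min\{\max\{t,\omega^l_{k+1}\},\omega^u_{k+1}\}$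 and $\rho=z_k^Ts_k$ let $\tau^s=P(\rho/\|s_k\|^2)$, $\tau^g=P(\|z_k\|/\|s_k\|)$, $\tau^z=P(\|z_k\|^2/\rho)$; if $\rho>0$ choose $\tau_{k+1}\in[\tau^s,\tau^z]$, else choose $\tau_{k+1}\in[\tau^s,\tau^g]$. Line searches: Armijo with backtracking means, for fixed $\beta,\sigma\in(0,1)$, $\alpha_k$ is the largest number in $\{1,\beta,\beta^2,\ldots\}$ with $\mathcal{J}(x_{k+1})\le\mathcal{J}(x_k)+\alpha_k\sigma\nabla\mathcal{J}(x_k)^Td_k$; the Wolfe–Powell conditions are this Armijo inequality together with $\nabla\mathcal{J}(x_{k+1})^Td_k\ge\eta\nabla\mathcal{J}(x_k)^Td_k$ for fixed $\eta\in(\sigma,1)$. Let $\Omega=\{x:\mathcal{J}(x)\le\mathcal{J}(x_0)\}$ and $\Omega_\delta=\{x:\exists\hat x\in\Omega,\ \|x-\hat x\|<\delta\}$. Standing assumptions: 1) $\mathcal{J}$ is continuously differentiable and bounded below; 2) $\nabla\mathcal{J}$ is Lipschitz continuous on $\Omega$ with constant $L>0$; 3) $(\|S_k\|)$ is bounded; 4) the step sizes consistently satisfy the Armijo condition computed by backtracking, or consistently satisfy the Wolfe–Powell conditions; in the Armijo case there is $\delta>0$ such that $\mathcal{J}$ or $\nabla\mathcal{J}$ is uniformly continuous on $\Omega_\delta$; 5) $c_0=0$ is only chosen if then $\sup_k\|(B_k^{(0)})^{-1}\|<\infty$; 6) $C_0=\infty$ is only chosen if either the interval $[\tau^s,\tau^z]$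 is replaced by $[\tau^s,\tau^g]$, or $\mathcal{J}$ is twice continuously differentiable, $\int_0^1\nabla^2\mathcal{J}(x_k+ts_k)\,dt-S_{k+1}$ is symmetric positive semi-definite for all $k$ with bounded norms; 7) the algorithm is run with $\epsilon=0$ and generates an infinite sequence $(x_k)$; 8) $(\|B_k\|)$ and $(\|B_k^{-1}\|)$ are bounded; 9) if Armijo backtracking is used, there is $\delta>0$ such that $\mathcal{J}$ is uniformly continuous on $\Omega_\delta$ or $\nabla\mathcal{J}$ is Lipschitz continuous on $\Omega_\delta$. *)

theory Defs
  imports "HOL-Analysis.Analysis"
begin

definition sym_psd :: "('a::real_inner \<Rightarrow> 'a) \<Rightarrow> bool" where
  "sym_psd S \<longleftrightarrow> bounded_linear S \<and> (\<forall>v w. inner (S v) w = inner v (S w)) \<and> (\<forall>v. 0 \<le> inner (S v) v)"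

definition lbfgs_update :: "('a::real_inner \<Rightarrow> 'a) \<Rightarrow> 'a \<Rightarrow> 'a \<Rightarrow> ('a \<Rightarrow> 'a)" where
  "lbfgs_update B s y = (\<lambda>v. B v + (inner y v / inner y s) *\<^sub>R y - (inner (B s) v / inner s (B s)) *\<^sub>R B s)"

definition stored_indices :: "nat \<Rightarrow> nat \<Rightarrow> real \<Rightarrow> (nat \<Rightarrow> 'a::real_inner) \<Rightarrow> (nat \<Rightarrow> 'a) \<Rightarrow> nat list" where
  "stored_indices ell k cs s y = filter (\<lambda>j. inner (y j) (s j) > cs * (norm (s j))\<^sup>2) [max 0 (k - ell)..<k]"

definition lbfgs_op :: "('a::real_inner \<Rightarrow> 'a) \<Rightarrow> nat list \<Rightarrow> (nat \<Rightarrow> 'a) \<Rightarrow> (nat \<Rightarrow> 'a) \<Rightarrow> ('a \<Rightarrow> 'a)" where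
  "lbfgs_op B0 js s y = foldl (\<lambda>B j. lbfgs_update B (s j) (y j)) B0 js"

definition proj_tau :: "real \<Rightarrow> ereal \<Rightarrow> real \<Rightarrow> ereal" where
  "proj_tau lo hi t = min (max (ereal t) (ereal lo)) hi"

definition omega_l :: "real \<Rightarrow> real \<Rightarrow> real \<Rightarrow> 'a::real_normed_vector \<Rightarrow> real" where
  "omega_l c0 c1 c2 g = min c0 (c1 * norm g powr c2)"

definition omega_u :: "ereal \<Rightarrow> real \<Rightarrow> real \<Rightarrow> 'a::real_normed_vector \<Rightarrow> ereal" where
  "omega_u C0 c1 c2 g = max C0 (ereal (inverse (c1 * norm g powr c2)))"

text \<open>Admissible choice of tau_{k+1}, given gradient g = grad J(x_{k+1}), s = s_k and z = z_k.
  If use_g holds, the interval [tau^s, tau^z] is replaced by [tau^s, tau^g].\<close>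
definition tau_admissible ::
  "bool \<Rightarrow> real \<Rightarrow> ereal \<Rightarrow> real \<Rightarrow> real \<Rightarrow> 'a::real_inner \<Rightarrow> 'a \<Rightarrow> 'a \<Rightarrow> real \<Rightarrow> bool" where
  "tau_admissible use_g c0 C0 c1 c2 g s z tau \<longleftrightarrow>
     (let lo = omega_l c0 c1 c2 g; hi = omega_u C0 c1 c2 g; rho = inner z s;
          ts = proj_tau lo hi (rho / (norm s)\<^sup>2);
          tg = proj_tau lo hi (norm z / norm s);
          tz = proj_tau lo hi ((norm z)\<^sup>2 / rho)
      in if rho > 0 \<and> \<not> use_g then ts \<le> ereal tau \<and> ereal tau \<le> tz
         else ts \<le> ereal tau \<and> ereal tau \<le> tg)"

definition armijo_cond :: "('a::real_inner \<Rightarrow> real) \<Rightarrow> ('a \<Rightarrow> 'a) \<Rightarrow> real \<Rightarrow> 'a \<Rightarrow> 'a \<Rightarrow> real \<Rightarrow> bool" where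
  "armijo_cond J G \<sigma> x d \<alpha> \<longleftrightarrow> J (x + \<alpha> *\<^sub>R d) \<le> J x + \<alpha> * \<sigma> * inner (G x) d"

definition armijo_backtracking ::
  "('a::real_inner \<Rightarrow> real) \<Rightarrow> ('a \<Rightarrow> 'a) \<Rightarrow> real \<Rightarrow> real \<Rightarrow> 'a \<Rightarrow> 'a \<Rightarrow> real \<Rightarrow> bool" where
  "armijo_backtracking J G \<beta> \<sigma> x d \<alpha> \<longleftrightarrow>
     (\<exists>i::nat. \<alpha> = \<beta> ^ i \<and> armijo_cond J G \<sigma> x d \<alpha> \<and> (\<forall>i'<i. \<not> armijo_cond J G \<sigma> x d (\<beta> ^ i')))"

definition wolfe_powell ::
  "('a::real_inner \<Rightarrow> real) \<Rightarrow> ('a \<Rightarrow> 'a) \<Rightarrow> real \<Rightarrow> real \<Rightarrow> 'a \<Rightarrow> 'a \<Rightarrow> real \<Rightarrow> bool" where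
  "wolfe_powell J G \<sigma> \<eta> x d \<alpha> \<longleftrightarrow>
     0 < \<alpha> \<and> armijo_cond J G \<sigma> x d \<alpha> \<and> inner (G (x + \<alpha> *\<^sub>R d)) d \<ge> \<eta> * inner (G x) d"

definition nbhd :: "'a::metric_space set \<Rightarrow> real \<Rightarrow> 'a set" where
  "nbhd \<Omega> \<delta> = {x. \<exists>xh\<in>\<Omega>. dist x xh < \<delta>}"

definition r_linear :: "(nat \<Rightarrow> 'a::real_normed_vector) \<Rightarrow> 'a \<Rightarrow> bool" where
  "r_linear a l \<longleftrightarrow> (\<exists>C q. 0 \<le> q \<and> q < 1 \<and> (\<forall>k. norm (a k - l) \<le> C * q ^ k))"

end

theory Submission
  imports Defs
begin

(* The operators B_k are symmetric positive semi-definite: tau_k I + S_k is, and an L-BFGS update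
   with a pair of positive curvature y^T s > 0 preserves this.  With the uniform bounds on B_k and
   B_k^-1 the quasi-Newton direction d_k = -B_k^-1 g_k (g_k the gradient at x_k) is a descent
   direction with |g_k|^2 <= |B_k| (-g_k^T d_k) and |d_k|^2 <= c (-g_k^T d_k), and the Lipschitz
   continuity of the gradient on the sublevel set keeps the step sizes of both line searches
   bounded away from zero.
   The Armijo decrease together with the PL inequality contracts the gap J(x_k) - J* by the
   factor 1 - sigma alpha_k mu / |B_k| <= 1 - sigma alpha_min mu / sup |B_k| < 1, so the gaps
   decay geometrically.  The squared gradients and the squared steps are bounded by multiples of
   the gap, hence the gradients tend to zero and the steps are geometrically summable: the iterates
   converge r-linearly to a point, which is stationary with value J* by continuity. *)

section \<open>Symmetric positive semi-definite operators and the L-BFGS update\<close>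

lemma sym_psd_inner_sq_le:
  assumes "sym_psd B"
  shows "(inner (B u) v)\<^sup>2 \<le> inner (B u) u * inner (B v) v"
proof -
  interpret bounded_linear B using assms unfolding sym_psd_def by blast
  define a b c where "a = inner (B u) u" and "b = inner (B u) v" and "c = inner (B v) v"
  have quadratic_nonneg: "0 \<le> a + 2 * t * b + t\<^sup>2 * c" for t
  proof -
    have "inner (B v) u = b"
      using assms unfolding sym_psd_def b_def by (metis inner_commute)
    then have "inner (B (u + t *\<^sub>R v)) (u + t *\<^sub>R v) = a + 2 * t * b + t\<^sup>2 * c"
      by (simp add: add scale a_def b_def c_def power2_eq_square algebra_simps)
    then show ?thesis using assms unfolding sym_psd_def by metis
  qed
  have "c \<ge> 0" using assms unfolding sym_psd_def c_def by auto
  show ?thesis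
    unfolding a_def [symmetric] b_def [symmetric] c_def [symmetric]
  proof (cases "c = 0")
    case True
    have "b = 0"
    proof (rule ccontr)
      assume "b \<noteq> 0"
      then show False
        using quadratic_nonneg [of "- (a + 1) / (2 * b)"] True by (simp add: field_simps)
    qed
    then show "b\<^sup>2 \<le> a * c" using True by simp
  next
    case False
    with \<open>c \<ge> 0\<close> have "c > 0" by simp
    have "0 \<le> a + 2 * (- b / c) * b + (- b / c)\<^sup>2 * c"
      by (rule quadratic_nonneg)
    also have "\<dots> = a - b\<^sup>2 / c"
      using \<open>c > 0\<close> by (simp add: field_simps power2_eq_square)
    finally show "b\<^sup>2 \<le> a * c" using \<open>c > 0\<close> by (simp add: field_simps)
  qed
qed

lemma sym_psd_norm_sq_le:
  assumes "sym_psd B"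
  shows "(norm (B w))\<^sup>2 \<le> onorm B * inner (B w) w"
proof (cases "B w = 0")
  case True
  then show ?thesis
    using assms onorm_pos_le [of B] unfolding sym_psd_def by auto
next
  case False
  have bl: "bounded_linear B" and nonneg: "0 \<le> inner (B w) w"
    using assms unfolding sym_psd_def by auto
  have "((norm (B w))\<^sup>2)\<^sup>2 = (inner (B w) (B w))\<^sup>2"
    by (simp add: power2_norm_eq_inner)
  also have "\<dots> \<le> inner (B w) w * inner (B (B w)) (B w)"
    using sym_psd_inner_sq_le [OF assms, of w "B w"] by simp
  also have "\<dots> \<le> inner (B w) w * (onorm B * (norm (B w))\<^sup>2)"
  proof (rule mult_left_mono [OF _ nonneg])
    have "inner (B (B w)) (B w) \<le> norm (B (B w)) * norm (B w)"
      by (rule norm_cauchy_schwarz)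
    also have "\<dots> \<le> onorm B * norm (B w) * norm (B w)"
      by (intro mult_right_mono onorm [OF bl]) simp
    finally show "inner (B (B w)) (B w) \<le> onorm B * (norm (B w))\<^sup>2"
      by (simp add: power2_eq_square mult.assoc)
  qed
  finally have "(norm (B w))\<^sup>2 * (norm (B w))\<^sup>2 \<le> (onorm B * inner (B w) w) * (norm (B w))\<^sup>2"
    by (simp add: power2_eq_square [of "(norm (B w))\<^sup>2"] algebra_simps)
  then show ?thesis
    by (rule mult_right_le_imp_le) (use False in simp)
qed

lemma sym_psd_shift:
  assumes "0 \<le> \<tau>" "sym_psd S"
  shows "sym_psd (\<lambda>v. \<tau> *\<^sub>R v + S v)"
proof -
  have "bounded_linear S" using assms unfolding sym_psd_def by blast
  then have "bounded_linear (\<lambda>v. \<tau> *\<^sub>R v + S v)"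
    by (intro bounded_linear_add bounded_linear_scaleR_right bounded_linear_ident)
  then show ?thesis
    using assms unfolding sym_psd_def by (simp add: inner_add_left inner_add_right inner_commute)
qed

lemma sym_psd_lbfgs_update:
  assumes "sym_psd B" "0 \<le> inner y s"
  shows "sym_psd (lbfgs_update B s y)"
proof -
  have bl: "bounded_linear B" and sym: "\<And>v w. inner (B v) w = inner v (B w)"
    and nonneg: "\<And>v. 0 \<le> inner (B v) v"
    using assms unfolding sym_psd_def by auto
  have "bounded_linear (lbfgs_update B s y)"
    unfolding lbfgs_update_def
    by (intro bounded_linear_add bounded_linear_sub bl bounded_linear_scaleR_left
        bounded_linear_compose [OF bounded_linear_scaleR_left
          bounded_linear_compose [OF bounded_linear_divide bounded_linear_inner_right]])
  moreover have "inner (lbfgs_update B s y v) w = inner v (lbfgs_update B s y w)" for v w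
  proof -
    have "inner w (B v) = inner v (B w)" by (metis sym inner_commute)
    then show ?thesis
      unfolding lbfgs_update_def by (simp add: sym algebra_simps inner_commute)
  qed
  moreover have "0 \<le> inner (lbfgs_update B s y v) v" for v
  proof -
    have "inner (lbfgs_update B s y v) v
          = inner (B v) v + (inner y v)\<^sup>2 / inner y s - (inner (B s) v)\<^sup>2 / inner s (B s)"
      unfolding lbfgs_update_def
      by (simp add: inner_add_right inner_diff_left inner_diff_right power2_eq_square inner_commute)
    moreover have "0 \<le> (inner y v)\<^sup>2 / inner y s"
      using assms(2) by simp
    moreover have "(inner (B s) v)\<^sup>2 / inner s (B s) \<le> inner (B v) v"
    proof (cases "inner s (B s) = 0")
      case True
      then show ?thesis using nonneg by simp
    next
      case False
      then have "inner s (B s) > 0"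
        using nonneg [of s] by (simp add: inner_commute)
      moreover have "(inner (B s) v)\<^sup>2 \<le> inner s (B s) * inner (B v) v"
        using sym_psd_inner_sq_le [OF assms(1), of s v] by (simp add: inner_commute)
      ultimately show ?thesis by (simp add: divide_le_eq mult.commute)
    qed
    ultimately show ?thesis by linarith
  qed
  ultimately show ?thesis unfolding sym_psd_def by blast
qed

lemma sym_psd_lbfgs_op:
  assumes "sym_psd B0" "\<forall>j\<in>set js. 0 \<le> inner (y j) (s j)"
  shows "sym_psd (lbfgs_op B0 js s y)"
  using assms
proof (induction js arbitrary: B0)
  case Nil
  then show ?case by (simp add: lbfgs_op_def)
next
  case (Cons j js)
  then have "sym_psd (lbfgs_update B0 (s j) (y j))"
    by (intro sym_psd_lbfgs_update) auto
  with Cons show ?case by (simp add: lbfgs_op_def)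
qed

lemma sym_psd_lbfgs_op_stored:
  assumes "sym_psd B0" "0 \<le> cs"
  shows "sym_psd (lbfgs_op B0 (stored_indices ell k cs s y) s y)"
proof (rule sym_psd_lbfgs_op [OF assms(1)], intro ballI)
  fix j assume "j \<in> set (stored_indices ell k cs s y)"
  then have "cs * (norm (s j))\<^sup>2 < inner (y j) (s j)"
    unfolding stored_indices_def by auto
  moreover have "0 \<le> cs * (norm (s j))\<^sup>2" using assms(2) by simp
  ultimately show "0 \<le> inner (y j) (s j)" by linarith
qed

lemma sym_psd_solution_grad_bound:
  assumes "sym_psd B" "B d = - g"
  shows "(norm g)\<^sup>2 \<le> onorm B * (- inner g d)"
  using sym_psd_norm_sq_le [OF assms(1), of d] assms(2) by simp

lemma sym_psd_solution_dir_bound: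
  assumes "sym_psd B" "bij B" "B d = - g" "\<forall>v. norm (inv B v) \<le> M * norm v"
  shows "(norm d)\<^sup>2 \<le> M\<^sup>2 * onorm B * (- inner g d)"
proof -
  have "norm d = norm (inv B (B d))"
    using assms(2) by (simp add: bij_is_inj)
  also have "\<dots> \<le> M * norm (B d)"
    using assms(4) by blast
  finally have "(norm d)\<^sup>2 \<le> M\<^sup>2 * (norm g)\<^sup>2"
    unfolding assms(3) by (metis norm_ge_zero norm_minus_cancel power_mono power_mult_distrib)
  also have "\<dots> \<le> M\<^sup>2 * (onorm B * (- inner g d))"
    using sym_psd_solution_grad_bound [OF assms(1,3)] by (intro mult_left_mono) auto
  finally show ?thesis
    by (simp add: mult.assoc)
qed

lemma sym_psd_solution_descent:
  assumes "sym_psd B" "B d = - g" "g \<noteq> 0"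
  shows "inner g d < 0"
proof -
  have "0 \<le> inner (B d) d" using assms(1) unfolding sym_psd_def by blast
  moreover have "inner (B d) d \<noteq> 0"
  proof
    assume "inner (B d) d = 0"
    then have "(norm g)\<^sup>2 \<le> 0"
      using sym_psd_solution_grad_bound [OF assms(1,2)] assms(2) by simp
    with assms(3) show False by simp
  qed
  ultimately show ?thesis using assms(2) by simp
qed

section \<open>Step sizes of the line searches\<close>

lemma has_real_derivative_along_line:
  assumes "\<forall>z. (J has_derivative (\<lambda>h. inner (G z) h)) (at z)"
  shows "((\<lambda>t. J (x + t *\<^sub>R d)) has_real_derivative inner (G (x + t *\<^sub>R d)) d) (at t)"
proof -
  have "((\<lambda>t. x + t *\<^sub>R d) has_derivative (\<lambda>h. h *\<^sub>R d)) (at t)"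
    by (auto intro!: derivative_eq_intros)
  from has_derivative_compose [OF this assms [rule_format, of "x + t *\<^sub>R d"]]
  show ?thesis
    unfolding has_field_derivative_def by (simp add: mult.commute [of _ "inner (G (x + t *\<^sub>R d)) d"])
qed

lemma DERIV_neg_critical_point:
  fixes f f' :: "real \<Rightarrow> real"
  assumes "0 < a" and der: "\<forall>t\<in>{0..a}. (f has_real_derivative f' t) (at t)"
    and "f 0 = 0" "f' 0 < 0" "f a > 0"
  shows "\<exists>\<xi>. 0 < \<xi> \<and> \<xi> < a \<and> f \<xi> < 0 \<and> f' \<xi> = 0"
proof -
  have "continuous_on {0..a} f"
    using der by (intro continuous_at_imp_continuous_on) (auto intro: DERIV_isCont)
  then obtain \<xi> where \<xi>: "\<xi> \<in> {0..a}" and min: "\<forall>t\<in>{0..a}. f \<xi> \<le> f t"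
    using continuous_attains_inf [of "{0..a}" f] \<open>0 < a\<close> by auto
  obtain \<delta> where "\<delta> > 0" and dec: "\<forall>h>0. h < \<delta> \<longrightarrow> f (0 + h) < f 0"
    using DERIV_neg_dec_right [OF _ \<open>f' 0 < 0\<close>] der \<open>0 < a\<close> by force
  define h where "h = min (\<delta> / 2) a"
  have "f \<xi> \<le> f h" "f h < 0"
    using min dec \<open>\<delta> > 0\<close> \<open>0 < a\<close> \<open>f 0 = 0\<close> unfolding h_def by auto
  then have "f \<xi> < 0" by linarith
  with \<xi> \<open>f 0 = 0\<close> \<open>f a > 0\<close> have "0 < \<xi>" "\<xi> < a"
    by (auto simp: order.order_iff_strict)
  moreover have "f' \<xi> = 0"
  proof (rule DERIV_local_min)
    show "(f has_real_derivative f' \<xi>) (at \<xi>)" using der \<xi> by blast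
    show "0 < min \<xi> (a - \<xi>)" using \<open>0 < \<xi>\<close> \<open>\<xi> < a\<close> by simp
    show "\<forall>y. \<bar>\<xi> - y\<bar> < min \<xi> (a - \<xi>) \<longrightarrow> f \<xi> \<le> f y"
      using min by (auto simp: abs_if)
  qed
  ultimately show ?thesis using \<open>f \<xi> < 0\<close> by blast
qed

lemma slope_bound_coeff_pos:
  assumes "inner g d < 0" "(norm d)\<^sup>2 \<le> c * (- inner g d)"
  shows "0 < c"
proof -
  have "0 < (norm d)\<^sup>2" using assms(1) by auto
  with assms show ?thesis by (smt (verit) mult_nonpos_nonneg)
qed

lemma lipschitz_curvature_step_ge:
  fixes G :: "'a::real_inner \<Rightarrow> 'a"
  assumes lip: "\<forall>u\<in>\<Omega>. \<forall>v\<in>\<Omega>. norm (G u - G v) \<le> L * norm (u - v)"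
    and "x \<in> \<Omega>" "x + t *\<^sub>R d \<in> \<Omega>" "0 \<le> t" "0 < L"
    and descent: "inner (G x) d < 0"
    and dir: "(norm d)\<^sup>2 \<le> c * (- inner (G x) d)"
    and curvature: "\<kappa> * (- inner (G x) d) \<le> inner (G (x + t *\<^sub>R d) - G x) d"
  shows "\<kappa> / (L * c) \<le> t"
proof -
  have "0 < c" using descent dir by (rule slope_bound_coeff_pos)
  have "\<kappa> * (- inner (G x) d) \<le> inner (G (x + t *\<^sub>R d) - G x) d"
    by (rule curvature)
  also have "\<dots> \<le> norm (G (x + t *\<^sub>R d) - G x) * norm d"
    by (rule norm_cauchy_schwarz)
  also have "\<dots> \<le> L * norm (t *\<^sub>R d) * norm d"
    using lip assms(2,3) by (intro mult_right_mono) (metis add_diff_cancel_left', simp)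
  also have "\<dots> = L * t * (norm d)\<^sup>2"
    using \<open>0 \<le> t\<close> by (simp add: power2_eq_square)
  also have "\<dots> \<le> (L * t * c) * (- inner (G x) d)"
    using mult_left_mono [OF dir, of "L * t"] \<open>0 \<le> t\<close> \<open>0 < L\<close> by (simp add: mult_ac)
  finally have "\<kappa> \<le> L * t * c"
    by (rule mult_right_le_imp_le) (use descent in simp)
  then show ?thesis
    using \<open>0 < L\<close> \<open>0 < c\<close> by (simp add: divide_le_eq mult_ac)
qed

lemma armijo_backtracking_step_ge:
  assumes J_grad: "\<forall>z. (J has_derivative (\<lambda>h. inner (G z) h)) (at z)"
    and lip: "\<forall>u\<in>{z. J z \<le> Jmax}. \<forall>v\<in>{z. J z \<le> Jmax}. norm (G u - G v) \<le> L * norm (u - v)"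
    and "J x \<le> Jmax" "0 < L" "0 < \<beta>" "0 < \<sigma>" "\<sigma> < 1"
    and descent: "inner (G x) d < 0"
    and dir: "(norm d)\<^sup>2 \<le> c * (- inner (G x) d)"
    and backtracking: "armijo_backtracking J G \<beta> \<sigma> x d \<alpha>"
  shows "min 1 (\<beta> * ((1 - \<sigma>) / (L * c))) \<le> \<alpha>"
proof -
  obtain i where \<alpha>: "\<alpha> = \<beta> ^ i" and fails: "\<forall>i'<i. \<not> armijo_cond J G \<sigma> x d (\<beta> ^ i')"
    using backtracking unfolding armijo_backtracking_def by blast
  show ?thesis
  proof (cases i)
    case 0
    then show ?thesis using \<alpha> by simp
  next
    case (Suc j)
    txt \<open>The rejected trial step \<open>a = \<alpha> / \<beta>\<close> violates the Armijo condition. A minimiser \<open>\<xi>\<close>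
      of \<open>\<phi>\<close> on \<open>[0, a]\<close> stays in the sublevel set and satisfies the curvature identity
      \<open>\<phi>' \<xi> = 0\<close>, to which the Lipschitz bound applies.\<close>
    define a where "a = \<beta> ^ j"
    define \<phi> where "\<phi> t = J (x + t *\<^sub>R d) - J x - t * \<sigma> * inner (G x) d" for t
    define \<phi>' where "\<phi>' t = inner (G (x + t *\<^sub>R d)) d - \<sigma> * inner (G x) d" for t
    have "0 < a" unfolding a_def using \<open>0 < \<beta>\<close> by simp
    moreover have "\<forall>t\<in>{0..a}. (\<phi> has_real_derivative \<phi>' t) (at t)"
      unfolding \<phi>_def \<phi>'_def
      by (auto intro!: derivative_eq_intros has_real_derivative_along_line [OF J_grad])
    moreover have "\<phi>' 0 < 0"
      using descent \<open>\<sigma> < 1\<close> unfolding \<phi>'_def by (simp add: mult_less_cancel_right2)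
    moreover have "\<phi> a > 0"
      using fails Suc unfolding \<phi>_def a_def armijo_cond_def by auto
    ultimately obtain \<xi> where "0 < \<xi>" "\<xi> < a" "\<phi> \<xi> < 0" "\<phi>' \<xi> = 0"
      using DERIV_neg_critical_point [of a \<phi> \<phi>'] unfolding \<phi>_def by auto
    have "\<xi> * \<sigma> * inner (G x) d \<le> 0"
      using \<open>0 < \<xi>\<close> \<open>0 < \<sigma>\<close> descent by (simp add: mult_nonneg_nonpos)
    then have "x + \<xi> *\<^sub>R d \<in> {z. J z \<le> Jmax}"
      using \<open>\<phi> \<xi> < 0\<close> \<open>J x \<le> Jmax\<close> unfolding \<phi>_def by simp
    moreover have "(1 - \<sigma>) * (- inner (G x) d) \<le> inner (G (x + \<xi> *\<^sub>R d) - G x) d"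
      using \<open>\<phi>' \<xi> = 0\<close> unfolding \<phi>'_def by (simp add: inner_diff_left algebra_simps)
    ultimately have "(1 - \<sigma>) / (L * c) \<le> \<xi>"
      using lipschitz_curvature_step_ge [OF lip] \<open>J x \<le> Jmax\<close> \<open>0 < \<xi>\<close> \<open>0 < L\<close> descent dir
      by simp
    then have "\<beta> * ((1 - \<sigma>) / (L * c)) \<le> \<beta> * a"
      using \<open>\<xi> < a\<close> \<open>0 < \<beta>\<close> by (intro mult_left_mono) auto
    then show ?thesis
      using \<alpha> Suc unfolding a_def by simp
  qed
qed

lemma wolfe_powell_step_ge:
  assumes lip: "\<forall>u\<in>{z. J z \<le> Jmax}. \<forall>v\<in>{z. J z \<le> Jmax}. norm (G u - G v) \<le> L * norm (u - v)"
    and "J x \<le> Jmax" "0 < L" "0 \<le> \<sigma>"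
    and descent: "inner (G x) d < 0"
    and dir: "(norm d)\<^sup>2 \<le> c * (- inner (G x) d)"
    and wolfe: "wolfe_powell J G \<sigma> \<eta> x d \<alpha>"
  shows "(1 - \<eta>) / (L * c) \<le> \<alpha>"
proof (rule lipschitz_curvature_step_ge [OF lip _ _ _ \<open>0 < L\<close> descent dir])
  have "0 < \<alpha>" and armijo: "J (x + \<alpha> *\<^sub>R d) \<le> J x + \<alpha> * \<sigma> * inner (G x) d"
    and curvature: "\<eta> * inner (G x) d \<le> inner (G (x + \<alpha> *\<^sub>R d)) d"
    using wolfe unfolding wolfe_powell_def armijo_cond_def by auto
  have "\<alpha> * \<sigma> * inner (G x) d \<le> 0"
    using \<open>0 < \<alpha>\<close> \<open>0 \<le> \<sigma>\<close> descent by (simp add: mult_nonneg_nonpos)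
  then show "x + \<alpha> *\<^sub>R d \<in> {z. J z \<le> Jmax}"
    using armijo \<open>J x \<le> Jmax\<close> by simp
  show "x \<in> {z. J z \<le> Jmax}" "0 \<le> \<alpha>"
    using \<open>J x \<le> Jmax\<close> \<open>0 < \<alpha>\<close> by auto
  show "(1 - \<eta>) * (- inner (G x) d) \<le> inner (G (x + \<alpha> *\<^sub>R d) - G x) d"
    using curvature by (simp add: inner_diff_left algebra_simps)
qed

lemma line_search_decrease:
  fixes x d :: "nat \<Rightarrow> 'a::real_inner"
  assumes "0 < \<beta>"
    and linesearch: "if armijo then (\<forall>k. armijo_backtracking J G \<beta> \<sigma> (x k) (d k) (\<alpha> k))
                     else (\<forall>k. wolfe_powell J G \<sigma> \<eta> (x k) (d k) (\<alpha> k))"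
  shows "0 < \<alpha> k \<and> J (x k + \<alpha> k *\<^sub>R d k) \<le> J (x k) + \<alpha> k * \<sigma> * inner (G (x k)) (d k)"
proof (cases armijo)
  case True
  then show ?thesis
    using linesearch \<open>0 < \<beta>\<close> unfolding armijo_backtracking_def armijo_cond_def
    by (metis zero_less_power)
next
  case False
  then show ?thesis
    using linesearch unfolding wolfe_powell_def armijo_cond_def by auto
qed

lemma line_search_step_lower_bound:
  fixes x d :: "nat \<Rightarrow> 'a::real_inner"
  assumes J_grad: "\<forall>z. (J has_derivative (\<lambda>h. inner (G z) h)) (at z)"
    and lip: "\<forall>u\<in>{z. J z \<le> Jmax}. \<forall>v\<in>{z. J z \<le> Jmax}. norm (G u - G v) \<le> L * norm (u - v)"
    and "\<forall>k. J (x k) \<le> Jmax" "0 < L"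
    and "0 < \<beta>" "0 < \<sigma>" "\<sigma> < 1" "armijo \<or> (\<sigma> < \<eta> \<and> \<eta> < 1)"
    and linesearch: "if armijo then (\<forall>k. armijo_backtracking J G \<beta> \<sigma> (x k) (d k) (\<alpha> k))
                     else (\<forall>k. wolfe_powell J G \<sigma> \<eta> (x k) (d k) (\<alpha> k))"
    and descent: "\<forall>k. inner (G (x k)) (d k) < 0"
    and dir: "\<forall>k. (norm (d k))\<^sup>2 \<le> c * (- inner (G (x k)) (d k))"
  shows "\<exists>\<alpha>\<^sub>m\<^sub>i\<^sub>n>0. \<forall>k. \<alpha>\<^sub>m\<^sub>i\<^sub>n \<le> \<alpha> k"
proof -
  have "0 < c"
    using descent [rule_format, of 0] dir [rule_format, of 0] by (rule slope_bound_coeff_pos)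
  show ?thesis
  proof (cases armijo)
    case True
    then have "min 1 (\<beta> * ((1 - \<sigma>) / (L * c))) \<le> \<alpha> k" for k
      using assms by (intro armijo_backtracking_step_ge [OF J_grad lip]) auto
    moreover have "0 < min 1 (\<beta> * ((1 - \<sigma>) / (L * c)))"
      using assms \<open>0 < c\<close> by simp
    ultimately show ?thesis by blast
  next
    case False
    then have "(1 - \<eta>) / (L * c) \<le> \<alpha> k" for k
      using assms by (intro wolfe_powell_step_ge [OF lip, where \<sigma> = \<sigma>]) auto
    moreover have "0 < (1 - \<eta>) / (L * c)"
      using assms False \<open>0 < c\<close> by simp
    ultimately show ?thesis by blast
  qed
qed

section \<open>Linearly convergent sequences\<close>

lemma r_linear_eventually:
  assumes "0 < r" "r < 1" and bound: "\<forall>k\<ge>K. norm (a k - l) \<le> C * r ^ k"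
  shows "r_linear a l"
proof -
  define C' where "C' = \<bar>C\<bar> + (\<Sum>k<K. norm (a k - l) / r ^ k)"
  have "norm (a k - l) \<le> C' * r ^ k" for k
  proof (cases "k < K")
    case True
    have "norm (a k - l) / r ^ k \<le> (\<Sum>k<K. norm (a k - l) / r ^ k)"
      using True \<open>0 < r\<close> by (intro member_le_sum) auto
    also have "\<dots> \<le> C'" unfolding C'_def by simp
    finally show ?thesis using \<open>0 < r\<close> by (simp add: divide_le_eq)
  next
    case False
    have "0 \<le> (\<Sum>k<K. norm (a k - l) / r ^ k)"
      using \<open>0 < r\<close> by (intro sum_nonneg) auto
    then have "C \<le> C'" unfolding C'_def by linarith
    then have "C * r ^ k \<le> C' * r ^ k"
      using \<open>0 < r\<close> by (intro mult_right_mono) auto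
    with False bound show ?thesis by (meson not_less order_trans)
  qed
  then show ?thesis
    unfolding r_linear_def using assms(1,2) by (intro exI [of _ C'] exI [of _ r]) auto
qed

lemma r_linear_imp_LIMSEQ:
  assumes "r_linear a l"
  shows "a \<longlonglongrightarrow> l"
proof -
  obtain C q where "0 \<le> q" "q < 1" and bound: "\<forall>k. norm (a k - l) \<le> C * q ^ k"
    using assms unfolding r_linear_def by blast
  have "(\<lambda>k. a k - l) \<longlonglongrightarrow> 0"
  proof (rule Lim_null_comparison)
    show "\<forall>\<^sub>F k in sequentially. norm (a k - l) \<le> C * q ^ k"
      using bound by simp
    show "(\<lambda>k. C * q ^ k) \<longlonglongrightarrow> 0"
      using \<open>0 \<le> q\<close> \<open>q < 1\<close> by (intro tendsto_mult_right_zero LIMSEQ_power_zero) auto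
  qed
  then show ?thesis by (simp add: LIM_zero_iff)
qed

lemma norm_le_sqrt_geometric:
  assumes "(norm v)\<^sup>2 \<le> A * e" "e \<le> C * r ^ k" "0 \<le> A" "0 \<le> r"
  shows "norm v \<le> sqrt (A * C) * sqrt r ^ k"
proof -
  have "(norm v)\<^sup>2 \<le> (A * C) * r ^ k"
    using assms(1) mult_left_mono [OF assms(2,3)] by (simp add: mult.assoc)
  then have "sqrt ((norm v)\<^sup>2) \<le> sqrt ((A * C) * r ^ k)"
    by (rule real_sqrt_le_mono)
  then show ?thesis by (simp add: real_sqrt_mult real_sqrt_power)
qed

lemma geometric_bound_of_contraction:
  fixes e :: "nat \<Rightarrow> real"
  assumes "\<forall>k. 0 \<le> e k" "\<forall>k\<ge>K. e (Suc k) \<le> q * e k" "q < 1"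
  shows "\<exists>C r. 0 < r \<and> r < 1 \<and> (\<forall>k\<ge>K. e k \<le> C * r ^ k)"
proof -
  define r where "r = max q (1 / 2)" \<comment> \<open>\<open>r > 0\<close>, so that \<open>e K * r ^ (k - K) = (e K / r ^ K) * r ^ k\<close>\<close>
  have "0 < r" "r < 1" unfolding r_def using \<open>q < 1\<close> by auto
  have "e k \<le> e K * r ^ (k - K)" if "K \<le> k" for k
    using that
  proof (induction k rule: dec_induct)
    case base
    then show ?case by simp
  next
    case (step k)
    have "e (Suc k) \<le> r * e k"
      using assms step.hyps unfolding r_def by (meson max.cobounded1 mult_right_mono order_trans)
    also have "\<dots> \<le> r * (e K * r ^ (k - K))"
      using step.IH \<open>0 < r\<close> by simp
    also have "\<dots> = e K * r ^ (Suc k - K)"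
      using step.hyps by (simp add: Suc_diff_le)
    finally show ?case .
  qed
  then have "\<forall>k\<ge>K. e k \<le> (e K / r ^ K) * r ^ k"
    using \<open>0 < r\<close> by (simp add: power_diff)
  with \<open>0 < r\<close> \<open>r < 1\<close> show ?thesis by blast
qed

lemma limit_of_geometric_steps:
  fixes x :: "nat \<Rightarrow> 'a::complete_space"
  assumes "0 < r" "r < 1" and steps: "\<forall>k\<ge>K. dist (x (Suc k)) (x k) \<le> C * r ^ k"
  shows "\<exists>l. \<forall>k\<ge>K. dist (x k) l \<le> C / (1 - r) * r ^ k"
proof -
  have "0 \<le> C * r ^ K"
    using steps [rule_format, of K] zero_le_dist [of "x (Suc K)" "x K"] by linarith
  then have "0 \<le> C"
    using zero_less_power [OF \<open>0 < r\<close>, of K] by (simp add: zero_le_mult_iff)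
  have partial: "dist (x n) (x k) \<le> C * (r ^ k - r ^ n) / (1 - r)" if "K \<le> k" "k \<le> n" for k n
    using \<open>k \<le> n\<close>
  proof (induction n rule: dec_induct)
    case base
    then show ?case by simp
  next
    case (step n)
    have "dist (x (Suc n)) (x k) \<le> dist (x n) (x k) + dist (x (Suc n)) (x n)"
      using dist_triangle [of "x (Suc n)" "x k" "x n"] by linarith
    also have "\<dots> \<le> C * (r ^ k - r ^ n) / (1 - r) + C * r ^ n"
      using step steps that by (intro add_mono) auto
    also have "\<dots> = C * (r ^ k - r ^ Suc n) / (1 - r)"
      using \<open>r < 1\<close> by (simp add: field_simps)
    finally show ?case .
  qed
  have tail: "dist (x n) (x k) \<le> C / (1 - r) * r ^ k" if "K \<le> k" "k \<le> n" for k n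
  proof -
    have "C * (r ^ k - r ^ n) \<le> C * r ^ k"
      using \<open>0 \<le> C\<close> \<open>0 < r\<close> by (simp add: mult_left_mono)
    then show ?thesis
      using partial [OF that] \<open>r < 1\<close> by (simp add: divide_right_mono order_trans)
  qed
  have "(\<lambda>k. C / (1 - r) * r ^ k) \<longlonglongrightarrow> 0"
    using assms by (intro tendsto_mult_right_zero LIMSEQ_power_zero) auto
  have "Cauchy x"
  proof (rule metric_CauchyI)
    fix e :: real assume "0 < e"
    then obtain N where N: "\<forall>k\<ge>N. C / (1 - r) * r ^ k < e / 2"
      using order_tendstoD(2) [OF \<open>_ \<longlonglongrightarrow> 0\<close>, of "e / 2"]
      unfolding eventually_sequentially by auto
    show "\<exists>M. \<forall>m\<ge>M. \<forall>n\<ge>M. dist (x m) (x n) < e"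
    proof (intro exI allI impI)
      fix m n assume "max N K \<le> m" "max N K \<le> n"
      then have "dist (x m) (x n) \<le> dist (x m) (x (max N K)) + dist (x n) (x (max N K))"
        by (simp add: dist_triangle2)
      also have "\<dots> < e"
        using tail [OF max.cobounded2 \<open>max N K \<le> m\<close>] tail [OF max.cobounded2 \<open>max N K \<le> n\<close>]
          N [rule_format, OF max.cobounded1 [of N K]] by linarith
      finally show "dist (x m) (x n) < e" .
    qed
  qed
  then obtain l where "x \<longlonglongrightarrow> l"
    using Cauchy_convergent_iff convergent_def by blast
  have "dist (x k) l \<le> C / (1 - r) * r ^ k" if "K \<le> k" for k
  proof -
    have "(\<lambda>n. dist (x n) (x k)) \<longlonglongrightarrow> dist l (x k)"
      using \<open>x \<longlonglongrightarrow> l\<close> by (intro tendsto_dist tendsto_const)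
    then have "dist l (x k) \<le> C / (1 - r) * r ^ k"
      by (rule LIMSEQ_le_const2) (use tail that in auto)
    then show ?thesis by (simp add: dist_commute)
  qed
  then show ?thesis by blast
qed

lemma r_linear_limit_of_geometric_steps:
  fixes x :: "nat \<Rightarrow> 'a::{real_normed_vector, complete_space}"
  assumes "0 < r" "r < 1" and steps: "\<forall>k\<ge>K. norm (x (Suc k) - x k) \<le> C * r ^ k"
  shows "\<exists>l. r_linear x l"
proof -
  obtain l where "\<forall>k\<ge>K. dist (x k) l \<le> C / (1 - r) * r ^ k"
    using limit_of_geometric_steps [OF assms(1,2), of K x C] steps by (auto simp: dist_norm)
  then have "r_linear x l"
    using assms(1,2) by (intro r_linear_eventually [of r K _ _ "C / (1 - r)"]) (auto simp: dist_norm)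
  then show ?thesis ..
qed

section \<open>Descent methods under a Polyak-Lojasiewicz inequality\<close>

locale armijo_descent =
  fixes J :: "'a::{real_inner, complete_space} \<Rightarrow> real" and G :: "'a \<Rightarrow> 'a"
    and x d :: "nat \<Rightarrow> 'a" and \<alpha> b :: "nat \<Rightarrow> real"
    and \<sigma> \<alpha>\<^sub>m\<^sub>i\<^sub>n b\<^sub>m\<^sub>a\<^sub>x c :: real
  assumes J_bdd: "bdd_below (range J)"
    and x_step: "\<And>k. x (Suc k) = x k + \<alpha> k *\<^sub>R d k"
    and decrease: "\<And>k. J (x (Suc k)) \<le> J (x k) + \<alpha> k * \<sigma> * inner (G (x k)) (d k)"
    and \<sigma>_pos: "0 < \<sigma>"
    and \<alpha>_min_pos: "0 < \<alpha>\<^sub>m\<^sub>i\<^sub>n" and \<alpha>_ge: "\<And>k. \<alpha>\<^sub>m\<^sub>i\<^sub>n \<le> \<alpha> k"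
    and b_pos: "\<And>k. 0 < b k" and b_le: "\<And>k. b k \<le> b\<^sub>m\<^sub>a\<^sub>x"
    and grad_bound: "\<And>k. (norm (G (x k)))\<^sup>2 \<le> b k * (- inner (G (x k)) (d k))"
    and dir_bound: "\<And>k. (norm (d k))\<^sup>2 \<le> c * (- inner (G (x k)) (d k))"
    and c_nonneg: "0 \<le> c"
begin

abbreviation J_star :: real where
  "J_star \<equiv> lim (\<lambda>k. J (x k))"

lemma slope_nonneg: "0 \<le> - inner (G (x k)) (d k)"
proof -
  have "0 \<le> b k * (- inner (G (x k)) (d k))"
    using grad_bound [of k] by (meson order_trans zero_le_power2)
  then show ?thesis using b_pos [of k] by (simp add: mult_le_0_iff)
qed

lemma \<alpha>_pos: "0 < \<alpha> k"
  using \<alpha>_min_pos \<alpha>_ge [of k] by linarith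

lemma b_max_pos: "0 < b\<^sub>m\<^sub>a\<^sub>x"
  using b_pos [of 0] b_le [of 0] by linarith

lemma J_converges: "(\<lambda>k. J (x k)) \<longlonglongrightarrow> J_star" and J_star_le: "J_star \<le> J (x k)"
proof -
  have "J (x (Suc k)) \<le> J (x k)" for k
  proof -
    have "\<alpha> k * \<sigma> * inner (G (x k)) (d k) \<le> 0"
      using slope_nonneg [of k] \<alpha>_pos [of k] \<sigma>_pos by (intro mult_nonneg_nonpos) auto
    then show ?thesis using decrease [of k] by linarith
  qed
  then have "decseq (\<lambda>k. J (x k))" by (simp add: decseq_Suc_iff)
  moreover obtain m where "\<forall>z. m \<le> J z" using J_bdd unfolding bdd_below_def by auto
  ultimately obtain l where "(\<lambda>k. J (x k)) \<longlonglongrightarrow> l" "\<forall>k. l \<le> J (x k)"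
    using decseq_convergent [of "\<lambda>k. J (x k)" m] by auto
  moreover from this have "J_star = l" by (simp add: limI)
  ultimately show "(\<lambda>k. J (x k)) \<longlonglongrightarrow> J_star" "J_star \<le> J (x k)" by auto
qed

lemma sufficient_decrease: "\<sigma> * \<alpha> k * (- inner (G (x k)) (d k)) \<le> J (x k) - J_star"
  using decrease [of k] J_star_le [of "Suc k"] by (simp add: algebra_simps)

lemma norm_grad_le: "norm (G (x k)) \<le> b\<^sub>m\<^sub>a\<^sub>x * norm (d k)"
proof (cases "G (x k) = 0")
  case True
  then show ?thesis using b_pos [of k] b_le [of k] by simp
next
  case False
  have "- inner (G (x k)) (d k) \<le> norm (G (x k)) * norm (d k)"
    using norm_cauchy_schwarz [of "- G (x k)" "d k"] by simp
  then have "(norm (G (x k)))\<^sup>2 \<le> (b k * norm (d k)) * norm (G (x k))"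
    using grad_bound [of k] b_pos [of k] by (smt (verit) mult.assoc mult.commute mult_left_mono)
  then have "norm (G (x k)) \<le> b k * norm (d k)"
    using False by (simp add: power2_eq_square)
  also have "\<dots> \<le> b\<^sub>m\<^sub>a\<^sub>x * norm (d k)"
    using b_le [of k] by (simp add: mult_right_mono)
  finally show ?thesis .
qed

lemma grad_sq_le_gap: "(norm (G (x k)))\<^sup>2 \<le> b\<^sub>m\<^sub>a\<^sub>x / (\<sigma> * \<alpha>\<^sub>m\<^sub>i\<^sub>n) * (J (x k) - J_star)"
proof -
  have "\<sigma> * \<alpha>\<^sub>m\<^sub>i\<^sub>n * (- inner (G (x k)) (d k)) \<le> \<sigma> * \<alpha> k * (- inner (G (x k)) (d k))"
    using \<alpha>_ge [of k] \<sigma>_pos slope_nonneg [of k] by (intro mult_right_mono mult_left_mono) auto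
  then have "- inner (G (x k)) (d k) * (\<sigma> * \<alpha>\<^sub>m\<^sub>i\<^sub>n) \<le> J (x k) - J_star"
    using sufficient_decrease [of k] by (simp add: mult.commute)
  then have "- inner (G (x k)) (d k) \<le> (J (x k) - J_star) / (\<sigma> * \<alpha>\<^sub>m\<^sub>i\<^sub>n)"
    using \<sigma>_pos \<alpha>_min_pos by (simp add: pos_le_divide_eq)
  then have "b k * (- inner (G (x k)) (d k)) \<le> b\<^sub>m\<^sub>a\<^sub>x * ((J (x k) - J_star) / (\<sigma> * \<alpha>\<^sub>m\<^sub>i\<^sub>n))"
    using b_pos [of k] b_le [of k] slope_nonneg [of k] by (meson less_imp_le mult_mono order_trans)
  then show ?thesis using grad_bound [of k] by simp
qed

end

locale armijo_descent_PL = armijo_descent +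
  fixes \<mu> :: real and kbar :: nat
  assumes \<mu>_pos: "0 < \<mu>"
    and PL: "\<And>k. kbar \<le> k \<Longrightarrow> \<mu> * (J (x k) - J_star) \<le> (norm (G (x k)))\<^sup>2"
begin

lemma gap_q_linear:
  assumes "kbar \<le> k"
  shows "J (x (Suc k)) - J_star \<le> (1 - \<sigma> * \<alpha> k * \<mu> / b k) * (J (x k) - J_star)"
proof -
  have "\<sigma> * \<alpha> k * \<mu> / b k * (J (x k) - J_star) \<le> \<sigma> * \<alpha> k / b k * (norm (G (x k)))\<^sup>2"
    using PL [OF assms] \<sigma>_pos \<alpha>_pos [of k] b_pos [of k]
    by (simp add: divide_right_mono mult_left_mono)
  also have "\<dots> \<le> \<sigma> * \<alpha> k / b k * (b k * (- inner (G (x k)) (d k)))"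
    using grad_bound [of k] \<sigma>_pos \<alpha>_pos [of k] b_pos [of k] by (intro mult_left_mono) auto
  also have "\<dots> = \<sigma> * \<alpha> k * (- inner (G (x k)) (d k))"
    using b_pos [of k] by simp
  finally show ?thesis
    using decrease [of k] by (simp add: algebra_simps)
qed

lemma contraction_factor_le: "1 - \<sigma> * \<alpha> k * \<mu> / b k \<le> 1 - \<sigma> * \<alpha>\<^sub>m\<^sub>i\<^sub>n * \<mu> / b\<^sub>m\<^sub>a\<^sub>x"
proof -
  have "\<sigma> * \<alpha>\<^sub>m\<^sub>i\<^sub>n * \<mu> / b\<^sub>m\<^sub>a\<^sub>x \<le> \<sigma> * \<alpha> k * \<mu> / b k"
    using \<sigma>_pos \<alpha>_min_pos \<alpha>_ge [of k] \<mu>_pos b_pos [of k] b_le [of k]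
    by (intro frac_le) auto
  then show ?thesis by simp
qed

lemma contraction_factor_SUP_less_1: "(SUP k\<in>{kbar..}. 1 - \<sigma> * \<alpha> k * \<mu> / b k) < 1"
proof -
  have "(SUP k\<in>{kbar..}. 1 - \<sigma> * \<alpha> k * \<mu> / b k) \<le> 1 - \<sigma> * \<alpha>\<^sub>m\<^sub>i\<^sub>n * \<mu> / b\<^sub>m\<^sub>a\<^sub>x"
    by (rule cSUP_least) (use contraction_factor_le in auto)
  also have "\<dots> < 1"
    using \<sigma>_pos \<alpha>_min_pos \<mu>_pos b_max_pos by simp
  finally show ?thesis .
qed

lemma gap_geometric: "\<exists>C r. 0 < r \<and> r < 1 \<and> (\<forall>k\<ge>kbar. J (x k) - J_star \<le> C * r ^ k)"
proof (rule geometric_bound_of_contraction)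
  show "\<forall>k. 0 \<le> J (x k) - J_star" using J_star_le by simp
  show "\<forall>k\<ge>kbar. J (x (Suc k)) - J_star \<le> (1 - \<sigma> * \<alpha>\<^sub>m\<^sub>i\<^sub>n * \<mu> / b\<^sub>m\<^sub>a\<^sub>x) * (J (x k) - J_star)"
  proof (intro allI impI)
    fix k assume "kbar \<le> k"
    then have "J (x (Suc k)) - J_star \<le> (1 - \<sigma> * \<alpha> k * \<mu> / b k) * (J (x k) - J_star)"
      by (rule gap_q_linear)
    also have "\<dots> \<le> (1 - \<sigma> * \<alpha>\<^sub>m\<^sub>i\<^sub>n * \<mu> / b\<^sub>m\<^sub>a\<^sub>x) * (J (x k) - J_star)"
      using contraction_factor_le J_star_le [of k] by (intro mult_right_mono) auto
    finally show "J (x (Suc k)) - J_star \<le> (1 - \<sigma> * \<alpha>\<^sub>m\<^sub>i\<^sub>n * \<mu> / b\<^sub>m\<^sub>a\<^sub>x) * (J (x k) - J_star)" .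
  qed
  show "1 - \<sigma> * \<alpha>\<^sub>m\<^sub>i\<^sub>n * \<mu> / b\<^sub>m\<^sub>a\<^sub>x < 1"
    using \<sigma>_pos \<alpha>_min_pos \<mu>_pos b_max_pos by simp
qed

text \<open>Under the PL inequality the accepted step sizes are bounded above (Wolfe-Powell steps may
  exceed 1), so the squared steps, and not only the squared gradients, are dominated by the gap.\<close>
lemma step_sq_le_gap:
  assumes "kbar \<le> k"
  shows "(norm (x (Suc k) - x k))\<^sup>2 \<le> (c * b\<^sub>m\<^sub>a\<^sub>x / \<sigma>)\<^sup>2 / \<mu> * (J (x k) - J_star)"
proof (cases "d k = 0")
  case True
  then show ?thesis using x_step [of k] J_star_le [of k] \<mu>_pos by simp
next
  case False
  have step_dir: "\<alpha> k * (norm (d k))\<^sup>2 \<le> c * (J (x k) - J_star) / \<sigma>"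
  proof -
    have "\<alpha> k * (norm (d k))\<^sup>2 \<le> c * (\<alpha> k * (- inner (G (x k)) (d k)))"
      using mult_left_mono [OF dir_bound, of "\<alpha> k" k] \<alpha>_pos [of k] by (simp add: mult_ac)
    also have "\<dots> \<le> c * ((J (x k) - J_star) / \<sigma>)"
      using sufficient_decrease [of k] \<sigma>_pos c_nonneg
      by (intro mult_left_mono) (simp_all add: field_simps)
    finally show ?thesis by simp
  qed
  have "\<alpha> k * (norm (d k))\<^sup>2 \<le> c * b\<^sub>m\<^sub>a\<^sub>x\<^sup>2 / (\<sigma> * \<mu>) * (norm (d k))\<^sup>2"
  proof -
    have "\<mu> * (J (x k) - J_star) \<le> (b\<^sub>m\<^sub>a\<^sub>x * norm (d k))\<^sup>2"
      using PL [OF assms] power_mono [OF norm_grad_le norm_ge_zero, of k 2] by linarith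
    then have "J (x k) - J_star \<le> (b\<^sub>m\<^sub>a\<^sub>x * norm (d k))\<^sup>2 / \<mu>"
      using \<mu>_pos by (simp add: pos_le_divide_eq mult.commute)
    then have "c * (J (x k) - J_star) / \<sigma> \<le> c * ((b\<^sub>m\<^sub>a\<^sub>x * norm (d k))\<^sup>2 / \<mu>) / \<sigma>"
      using c_nonneg \<sigma>_pos by (intro divide_right_mono mult_left_mono) auto
    with step_dir show ?thesis by (simp add: power_mult_distrib field_simps)
  qed
  then have \<alpha>_le: "\<alpha> k \<le> c * b\<^sub>m\<^sub>a\<^sub>x\<^sup>2 / (\<sigma> * \<mu>)"
    by (rule mult_right_le_imp_le) (use False in simp)
  have "(norm (x (Suc k) - x k))\<^sup>2 = \<alpha> k * (\<alpha> k * (norm (d k))\<^sup>2)"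
    using x_step [of k] \<alpha>_pos [of k] by (simp add: power2_eq_square)
  also have "\<dots> \<le> c * b\<^sub>m\<^sub>a\<^sub>x\<^sup>2 / (\<sigma> * \<mu>) * (c * (J (x k) - J_star) / \<sigma>)"
    using \<alpha>_le step_dir \<alpha>_pos [of k] by (intro mult_mono) auto
  also have "\<dots> = (c * b\<^sub>m\<^sub>a\<^sub>x / \<sigma>)\<^sup>2 / \<mu> * (J (x k) - J_star)"
    by (simp add: power2_eq_square mult_ac)
  finally show ?thesis .
qed

theorem linear_convergence:
  assumes "continuous_on UNIV J" "continuous_on UNIV G"
  shows "\<exists>x_star. G x_star = 0 \<and> J_star = J x_star \<and> r_linear x x_star \<and> r_linear (\<lambda>k. G (x k)) 0
           \<and> (\<forall>k\<ge>kbar. J (x (Suc k)) - J x_star \<le> (1 - \<sigma> * \<alpha> k * \<mu> / b k) * (J (x k) - J x_star))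
           \<and> (SUP k\<in>{kbar..}. 1 - \<sigma> * \<alpha> k * \<mu> / b k) < 1"
proof -
  obtain C r where "0 < r" "r < 1" and gap: "\<forall>k\<ge>kbar. J (x k) - J_star \<le> C * r ^ k"
    using gap_geometric by blast
  have "norm (G (x k) - 0) \<le> sqrt (b\<^sub>m\<^sub>a\<^sub>x / (\<sigma> * \<alpha>\<^sub>m\<^sub>i\<^sub>n) * C) * sqrt r ^ k" if "kbar \<le> k" for k
    using norm_le_sqrt_geometric [OF grad_sq_le_gap gap [rule_format, OF that]]
      b_max_pos \<sigma>_pos \<alpha>_min_pos \<open>0 < r\<close> by simp
  then have "r_linear (\<lambda>k. G (x k)) 0"
    using \<open>0 < r\<close> \<open>r < 1\<close> by (intro r_linear_eventually [of "sqrt r" kbar]) auto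
  moreover have "norm (x (Suc k) - x k) \<le> sqrt ((c * b\<^sub>m\<^sub>a\<^sub>x / \<sigma>)\<^sup>2 / \<mu> * C) * sqrt r ^ k"
    if "kbar \<le> k" for k
    using norm_le_sqrt_geometric [OF step_sq_le_gap [OF that] gap [rule_format, OF that]]
      \<mu>_pos \<open>0 < r\<close> by simp
  then obtain x_star where "r_linear x x_star"
    using \<open>0 < r\<close> \<open>r < 1\<close> r_linear_limit_of_geometric_steps [of "sqrt r" kbar x] by auto
  moreover have "G x_star = 0" "J_star = J x_star"
  proof -
    have "x \<longlonglongrightarrow> x_star" using \<open>r_linear x x_star\<close> by (rule r_linear_imp_LIMSEQ)
    then have "(\<lambda>k. G (x k)) \<longlonglongrightarrow> G x_star" "(\<lambda>k. J (x k)) \<longlonglongrightarrow> J x_star"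
      using assms by (auto intro: continuous_on_tendsto_compose)
    then show "G x_star = 0" "J_star = J x_star"
      using r_linear_imp_LIMSEQ [OF \<open>r_linear (\<lambda>k. G (x k)) 0\<close>] J_converges
      by (auto intro: LIMSEQ_unique)
  qed
  ultimately show ?thesis
    using gap_q_linear contraction_factor_SUP_less_1 by auto
qed

end

section \<open>The structured L-BFGS method\<close>

lemma tau_admissible_nonneg:
  assumes "tau_admissible use_g c0 C0 c1 c2 g s z \<tau>" "0 \<le> c0" "ereal c0 \<le> C0" "0 < c1"
  shows "0 \<le> \<tau>"
proof -
  define lo hi where "lo = omega_l c0 c1 c2 g" and "hi = omega_u C0 c1 c2 g"
  have "0 \<le> lo" unfolding lo_def omega_l_def using assms by auto
  have "ereal lo \<le> hi"
    unfolding lo_def hi_def omega_l_def omega_u_def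
    using assms(3) by (meson min.cobounded1 max.cobounded1 order_trans ereal_less_eq(3))
  then have "ereal lo \<le> proj_tau lo hi t" for t
    unfolding proj_tau_def by auto
  moreover obtain t where "proj_tau lo hi t \<le> ereal \<tau>"
    using assms(1) unfolding tau_admissible_def Let_def lo_def hi_def by (auto split: if_splits)
  ultimately have "ereal lo \<le> ereal \<tau>" by (meson order_trans)
  with \<open>0 \<le> lo\<close> show ?thesis by simp
qed

lemma slbfgs_operator_sym_psd:
  assumes "0 \<le> c0" "ereal c0 \<le> C0" "0 \<le> cs" "0 < c1" "0 < \<tau> 0"
    and "\<forall>k. sym_psd (S k)"
    and "\<forall>k. B k = lbfgs_op (\<lambda>v. \<tau> k *\<^sub>R v + S k v) (stored_indices ell k cs s y) s y"
    and "\<forall>k. tau_admissible use_g c0 C0 c1 c2 (g k) (s k) (z k) (\<tau> (Suc k))"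
  shows "sym_psd (B k)"
proof -
  have "0 \<le> \<tau> k"
    using assms(1-5) tau_admissible_nonneg [OF assms(8) [rule_format]] by (cases k) auto
  then show ?thesis
    using sym_psd_lbfgs_op_stored [OF sym_psd_shift [OF _ assms(6) [rule_format]] assms(3)] assms(7)
    by simp
qed

lemma quasi_newton_direction_bounds:
  fixes B :: "nat \<Rightarrow> 'a::real_inner \<Rightarrow> 'a"
  assumes B_psd: "\<forall>k. sym_psd (B k)" and B_bij: "\<forall>k. bij (B k)"
    and d_def: "\<forall>k. B k (d k) = - g k"
    and B_bdd: "\<forall>k. onorm (B k) \<le> b\<^sub>m\<^sub>a\<^sub>x"
    and Binv_bdd: "\<forall>k v. norm (inv (B k) v) \<le> M * norm v"
  shows "(norm (g k))\<^sup>2 \<le> onorm (B k) * (- inner (g k) (d k))"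
    and "(norm (d k))\<^sup>2 \<le> M\<^sup>2 * b\<^sub>m\<^sub>a\<^sub>x * (- inner (g k) (d k))"
proof -
  show "(norm (g k))\<^sup>2 \<le> onorm (B k) * (- inner (g k) (d k))"
    using sym_psd_solution_grad_bound [OF B_psd [rule_format] d_def [rule_format]] .
  have "0 \<le> - inner (g k) (d k)"
    using B_psd d_def unfolding sym_psd_def by (metis inner_minus_left)
  then have "M\<^sup>2 * onorm (B k) * (- inner (g k) (d k)) \<le> M\<^sup>2 * b\<^sub>m\<^sub>a\<^sub>x * (- inner (g k) (d k))"
    using B_bdd by (intro mult_right_mono mult_left_mono) auto
  then show "(norm (d k))\<^sup>2 \<le> M\<^sup>2 * b\<^sub>m\<^sub>a\<^sub>x * (- inner (g k) (d k))"
    using sym_psd_solution_dir_bound [OF B_psd [rule_format, of k] B_bij [rule_format]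
        d_def [rule_format] spec [OF Binv_bdd]]
    by linarith
qed

lemma quasi_newton_armijo_descent:
  fixes J :: "'a::{real_inner, complete_space} \<Rightarrow> real"
    and x d :: "nat \<Rightarrow> 'a" and B :: "nat \<Rightarrow> 'a \<Rightarrow> 'a"
  assumes ls_params: "0 < \<beta>" "0 < \<sigma>" "\<sigma> < 1" "armijo \<or> (\<sigma> < \<eta> \<and> \<eta> < 1)"
    and B_psd: "\<forall>k. sym_psd (B k)" and B_bij: "\<forall>k. bij (B k)"
    and d_def: "\<forall>k. B k (d k) = - G (x k)"
    and linesearch: "if armijo then (\<forall>k. armijo_backtracking J G \<beta> \<sigma> (x k) (d k) (\<alpha> k))
                     else (\<forall>k. wolfe_powell J G \<sigma> \<eta> (x k) (d k) (\<alpha> k))"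
    and iteration: "\<forall>k. x (Suc k) = x k + \<alpha> k *\<^sub>R d k"
    and no_stop: "\<forall>k. G (x (Suc k)) \<noteq> 0"
    and J_grad: "\<forall>z. (J has_derivative (\<lambda>h. inner (G z) h)) (at z)"
    and J_bdd: "bdd_below (range J)"
    and L_pos: "0 < L"
    and G_lip: "\<forall>u\<in>{z. J z \<le> J (x 0)}. \<forall>v\<in>{z. J z \<le> J (x 0)}. norm (G u - G v) \<le> L * norm (u - v)"
    and B_bdd: "\<forall>k. onorm (B k) \<le> b\<^sub>m\<^sub>a\<^sub>x"
    and Binv_bdd: "\<forall>k v. norm (inv (B k) v) \<le> M * norm v"
  shows "\<exists>\<alpha>\<^sub>m\<^sub>i\<^sub>n. armijo_descent J G x d \<alpha> (\<lambda>k. onorm (B k)) \<sigma> \<alpha>\<^sub>m\<^sub>i\<^sub>n b\<^sub>m\<^sub>a\<^sub>x (M\<^sup>2 * b\<^sub>m\<^sub>a\<^sub>x)"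
proof -
  note grad_bound = quasi_newton_direction_bounds(1) [OF B_psd B_bij d_def B_bdd Binv_bdd]
  note dir_bound = quasi_newton_direction_bounds(2) [OF B_psd B_bij d_def B_bdd Binv_bdd]
  have G_nonzero: "G (x k) \<noteq> 0" for k
  proof (cases k)
    case 0
    show ?thesis
    proof
      assume "G (x k) = 0"
      then have "d 0 = 0" using dir_bound [of 0] 0 by simp
      then show False using no_stop [rule_format, of 0] iteration \<open>G (x k) = 0\<close> 0 by simp
    qed
  qed (use no_stop in simp)
  have descent: "inner (G (x k)) (d k) < 0" for k
    using sym_psd_solution_descent [OF B_psd [rule_format] d_def [rule_format] G_nonzero] .
  have decrease: "0 < \<alpha> k" "J (x (Suc k)) \<le> J (x k) + \<alpha> k * \<sigma> * inner (G (x k)) (d k)" for k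
    using line_search_decrease [OF ls_params(1) linesearch] iteration by auto
  have "J (x (Suc k)) \<le> J (x k)" for k
    using decrease [of k] descent [of k] ls_params(2) by (smt (verit) mult_pos_neg mult_pos_pos)
  then have "decseq (\<lambda>k. J (x k))" by (rule decseq_SucI)
  then have "\<forall>k. J (x k) \<le> J (x 0)" using decseqD [of "\<lambda>k. J (x k)" 0] by simp
  then obtain \<alpha>\<^sub>m\<^sub>i\<^sub>n where "0 < \<alpha>\<^sub>m\<^sub>i\<^sub>n" "\<forall>k. \<alpha>\<^sub>m\<^sub>i\<^sub>n \<le> \<alpha> k"
    using line_search_step_lower_bound [OF J_grad G_lip _ L_pos ls_params linesearch] descent dir_bound
    by blast
  moreover have "0 < onorm (B k)" for k
    using onorm_pos_lt [of "B k"] B_psd d_def G_nonzero [of k] unfolding sym_psd_def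
    by (metis neg_equal_0_iff_equal)
  moreover from this have "0 \<le> M\<^sup>2 * b\<^sub>m\<^sub>a\<^sub>x"
    using B_bdd by (meson less_le_trans less_imp_le zero_le_power2 mult_nonneg_nonneg)
  ultimately show ?thesis
    using J_bdd iteration decrease ls_params(2) grad_bound dir_bound B_bdd
    by (intro exI) (unfold_locales, auto)
qed

theorem theorem4p12:
  fixes J :: "'a::{real_inner, complete_space} \<Rightarrow> real"
    and G :: "'a \<Rightarrow> 'a"
    and x d s y :: "nat \<Rightarrow> 'a"
    and \<alpha> \<tau> :: "nat \<Rightarrow> real"
    and S B :: "nat \<Rightarrow> 'a \<Rightarrow> 'a"
    and ell :: nat
    and c0 cs c1 c2 L \<beta> \<sigma> \<eta> \<mu> :: real
    and C0 :: ereal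
    and use_g armijo :: bool
    and kbar :: nat
  assumes params: "0 \<le> c0" "ereal c0 \<le> C0" "0 < cs" "0 < c1" "0 < c2" "0 < \<tau> 0"
    and ls_params: "0 < \<beta>" "\<beta> < 1" "0 < \<sigma>" "\<sigma> < 1" "armijo \<or> (\<sigma> < \<eta> \<and> \<eta> < 1)"
    \<comment> \<open>the algorithm SLBFGS (with \<epsilon> = 0)\<close>
    and S_psd: "\<forall>k. sym_psd (S k)"
    and B_def: "\<forall>k. B k = lbfgs_op (\<lambda>v. \<tau> k *\<^sub>R v + S k v) (stored_indices ell k cs s y) s y"
    and B_bij: "\<forall>k. bij (B k)"
    and d_def: "\<forall>k. B k (d k) = - G (x k)"
    and linesearch: "if armijo then (\<forall>k. armijo_backtracking J G \<beta> \<sigma> (x k) (d k) (\<alpha> k))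
                     else (\<forall>k. wolfe_powell J G \<sigma> \<eta> (x k) (d k) (\<alpha> k))"
    and s_def: "\<forall>k. s k = \<alpha> k *\<^sub>R d k"
    and x_step: "\<forall>k. x (Suc k) = x k + s k"
    and y_def: "\<forall>k. y k = G (x (Suc k)) - G (x k)"
    and no_stop: "\<forall>k. G (x (Suc k)) \<noteq> 0"
    and tau_choice: "\<forall>k. tau_admissible use_g c0 C0 c1 c2 (G (x (Suc k))) (s k)
                          (y k - S (Suc k) (s k)) (\<tau> (Suc k))"
    \<comment> \<open>standing assumption 1\<close>
    and J_grad: "\<forall>z. (J has_derivative (\<lambda>h. inner (G z) h)) (at z)"
    and G_cont: "continuous_on UNIV G"
    and J_bdd: "bdd_below (range J)"
    \<comment> \<open>standing assumption 2\<close>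
    and L_pos: "0 < L"
    and G_lip: "\<forall>u\<in>{z. J z \<le> J (x 0)}. \<forall>v\<in>{z. J z \<le> J (x 0)}. norm (G u - G v) \<le> L * norm (u - v)"
    \<comment> \<open>standing assumption 3\<close>
    and S_bdd: "\<exists>M. \<forall>k. onorm (S k) \<le> M"
    \<comment> \<open>standing assumptions 4 and 9 (Armijo case)\<close>
    and unif4: "armijo \<longrightarrow> (\<exists>\<delta>>0. uniformly_continuous_on (nbhd {z. J z \<le> J (x 0)} \<delta>) J
                                 \<or> uniformly_continuous_on (nbhd {z. J z \<le> J (x 0)} \<delta>) G)"
    and unif9: "armijo \<longrightarrow> (\<exists>\<delta>>0. uniformly_continuous_on (nbhd {z. J z \<le> J (x 0)} \<delta>) J
                                 \<or> (\<exists>L'. \<forall>u\<in>nbhd {z. J z \<le> J (x 0)} \<delta>. \<forall>v\<in>nbhd {z. J z \<le> J (x 0)} \<delta>.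
                                        norm (G u - G v) \<le> L' * norm (u - v)))"
    \<comment> \<open>standing assumption 5\<close>
    and c0_zero: "c0 = 0 \<longrightarrow> (\<forall>k. bij (\<lambda>v. \<tau> k *\<^sub>R v + S k v)) \<and>
                   (\<exists>M. \<forall>k v. norm (inv (\<lambda>v. \<tau> k *\<^sub>R v + S k v) v) \<le> M * norm v)"
    \<comment> \<open>standing assumption 6\<close>
    and C0_inf: "C0 = \<infinity> \<longrightarrow> use_g \<or>
          (\<exists>H :: 'a \<Rightarrow> ('a \<Rightarrow>\<^sub>L 'a).
              (\<forall>z. (G has_derivative blinfun_apply (H z)) (at z)) \<and> continuous_on UNIV H \<and>
              (\<forall>k. sym_psd (\<lambda>v. blinfun_apply (integral {0..1::real} (\<lambda>t. H (x k + t *\<^sub>R s k))) v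
                                   - S (Suc k) v)) \<and>
              (\<exists>M. \<forall>k. onorm (\<lambda>v. blinfun_apply (integral {0..1::real} (\<lambda>t. H (x k + t *\<^sub>R s k))) v
                                   - S (Suc k) v) \<le> M))"
    \<comment> \<open>standing assumption 8\<close>
    and B_bdd: "\<exists>M. \<forall>k. onorm (B k) \<le> M"
    and Binv_bdd: "\<exists>M. \<forall>k v. norm (inv (B k) v) \<le> M * norm v"
    \<comment> \<open>hypothesis of the theorem\<close>
    and mu_pos: "0 < \<mu>"
    and PL: "\<forall>k\<ge>kbar. J (x k) - lim (\<lambda>k. J (x k)) \<le> (1 / \<mu>) * (norm (G (x k)))\<^sup>2"
  shows "\<exists>xs. G xs = 0 \<and> lim (\<lambda>k. J (x k)) = J xs
           \<and> r_linear x xs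
           \<and> r_linear (\<lambda>k. G (x k)) 0
           \<and> (\<forall>k\<ge>kbar. J (x (Suc k)) - J xs
                 \<le> (1 - \<sigma> * \<alpha> k * \<mu> / onorm (B k)) * (J (x k) - J xs))
           \<and> (SUP k\<in>{kbar..}. 1 - \<sigma> * \<alpha> k * \<mu> / onorm (B k)) < 1"
proof -
  txt \<open>Only the standing assumptions 1, 2 and 8 are used: the bounds on \<open>B k\<close> and its inverse
    are assumed directly, and the Lipschitz bound on the sublevel set suffices for the backtracking
    argument, whose trial points stay in that set.\<close>
  have "sym_psd (B k)" for k
    using slbfgs_operator_sym_psd [OF params(1,2) _ params(4,6) S_psd B_def tau_choice] params(3)
    by simp
  moreover obtain M b\<^sub>m\<^sub>a\<^sub>x where "\<forall>k v. norm (inv (B k) v) \<le> M * norm v" "\<forall>k. onorm (B k) \<le> b\<^sub>m\<^sub>a\<^sub>x"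
    using Binv_bdd B_bdd by blast
  moreover have "\<forall>k. x (Suc k) = x k + \<alpha> k *\<^sub>R d k"
    using x_step s_def by simp
  ultimately obtain \<alpha>\<^sub>m\<^sub>i\<^sub>n where "armijo_descent J G x d \<alpha> (\<lambda>k. onorm (B k)) \<sigma> \<alpha>\<^sub>m\<^sub>i\<^sub>n b\<^sub>m\<^sub>a\<^sub>x (M\<^sup>2 * b\<^sub>m\<^sub>a\<^sub>x)"
    using quasi_newton_armijo_descent [OF ls_params(1,3-5) _ B_bij d_def linesearch _ no_stop
        J_grad J_bdd L_pos G_lip] by blast
  then interpret armijo_descent_PL J G x d \<alpha> "\<lambda>k. onorm (B k)" \<sigma> \<alpha>\<^sub>m\<^sub>i\<^sub>n b\<^sub>m\<^sub>a\<^sub>x "M\<^sup>2 * b\<^sub>m\<^sub>a\<^sub>x" \<mu> kbar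
  proof (rule armijo_descent_PL.intro, unfold_locales)
    show "\<mu> * (J (x k) - lim (\<lambda>k. J (x k))) \<le> (norm (G (x k)))\<^sup>2" if "kbar \<le> k" for k
    proof -
      have "J (x k) - lim (\<lambda>k. J (x k)) \<le> (norm (G (x k)))\<^sup>2 / \<mu>" using PL that by simp
      then show ?thesis using mu_pos by (simp add: pos_le_divide_eq mult.commute)
    qed
  qed (rule mu_pos)
  have "continuous_on UNIV J"
    using J_grad has_derivative_continuous by (blast intro: continuous_at_imp_continuous_on)
  then show ?thesis
    using linear_convergence [OF _ G_cont] by simp
qed

end
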